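(* Let $x,y,z\in\mathbb{C}^*$ with $x^N+y^N=z^N$. Then for all $k,l\in\mathbb{Z}$ (whenever both sides are defined), $$\omega(x,y,z\,|\,k-l)=\frac{\omega^{kl}\,\omega^{-\frac{l^2}{2}-\frac{k^2}{2}}}{\omega\big(z,\,-\omega^{1/2}y,\,\omega x\,\big|\,l-k\big)}.$$
   Context: $N\ge3$ odd, $N=2P+1$, $\omega=e^{2\pi i/N}$; for integers $r$, $\omega^{r/2}:=(\omega^{P+1})^r$ (so $\omega^{1/2}=\omega^{P+1}=-e^{i\pi/N}$). For $x,y,z\in\mathbb{C}^*$ with $x^N+y^N=z^N$ and $n\in\{0,\dots,N-1\}$, $\omega(x,y,z|n)=\prod_{j=1}^n\frac{y}{z-x\omega^j}$; since the product over $j=1,\dots,N$ equals $1$, this is extended $N$-periodically to $n\in\mathbb{Z}$. (Note $z^N+(-\omega^{1/2}y)^N=(\omega x)^N$.) *)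

theory Defs
  imports "HOL-Analysis.Analysis"
begin

definition root_N :: "nat \<Rightarrow> complex" where
  "root_N N = exp (2 * of_real pi * \<i> / of_nat N)"

text \<open>Half-integer powers: omega^(r/2) := (omega^(P+1))^r for N = 2P+1, r integer.\<close>
definition half_pow :: "nat \<Rightarrow> int \<Rightarrow> complex" where
  "half_pow N r = (root_N N ^ (N div 2 + 1)) powi r"

text \<open>omega(x,y,z|n) = prod_{j=1}^{n mod N} y/(z - x omega^j), the N-periodic extension
  of the product defined for n in {0..N-1}.\<close>
definition fermat_omega :: "nat \<Rightarrow> complex \<Rightarrow> complex \<Rightarrow> complex \<Rightarrow> int \<Rightarrow> complex" where
  "fermat_omega N x y z n =
     (\<Prod>j\<in>{1..nat (n mod int N)}. y / (z - x * root_N N ^ j))"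

end

theory Submission
  imports Defs "HOL-Computational_Algebra.Polynomial"
begin

text \<open>Write \<open>h = \<omega>\<^sup>1\<^sup>/\<^sup>2\<close>, so that \<open>h\<^sup>2 = \<omega>\<close> and \<open>h\<^sup>N = 1\<close>. Under the substitution \<open>j \<mapsto> N + 1 - j\<close>,
  the \<open>j\<close>-th factor of \<open>\<omega>(z, -h y, \<omega> x | \<cdot>)\<close> becomes \<open>h^(1 - 2j)\<close> times the factor
  \<open>y / (z - x \<omega>^(N + 1 - j))\<close> of \<open>\<omega>(x, y, z | \<cdot>)\<close>. As the odd numbers sum to squares,
  \<open>\<omega>(z, -h y, \<omega> x | -n)\<close> is therefore \<open>h^(-n\<^sup>2)\<close> times the product of those factors of
  \<open>\<omega>(x, y, z | \<cdot>)\<close> that do not occur in \<open>\<omega>(x, y, z | n)\<close>; and the product of all \<open>N\<close> factors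
  is 1 because \<open>\<Prod>\<^sub>j (z - x \<omega>^j) = z\<^sup>N - x\<^sup>N = y\<^sup>N\<close>. Hence
  \<open>\<omega>(x, y, z | n) \<omega>(z, -h y, \<omega> x | -n) = h^(-n\<^sup>2)\<close>, and for \<open>n = k - l\<close> the numerator
  \<open>\<omega>^(kl) h^(-l\<^sup>2) h^(-k\<^sup>2)\<close> is exactly \<open>h^(-(k - l)\<^sup>2)\<close>.\<close>

lemma power_int_mod_order:
  fixes u :: "'a::division_ring"
  assumes "u ^ N = 1"
  shows "u powi a = u powi (a mod int N)"
proof (cases "N = 0")
  case False
  then have "u \<noteq> 0" using assms by (metis power_0_left zero_neq_one)
  then have "u powi a = u powi (int N * (a div int N)) * u powi (a mod int N)"
    by (metis div_mult_mod_eq mult.commute power_int_add)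
  also have "u powi (int N * (a div int N)) = 1"
    by (simp add: power_int_mult assms)
  finally show ?thesis by simp
qed simp

lemma prod_power_int_odd:
  fixes u :: "'a::field"
  assumes "u \<noteq> 0"
  shows "(\<Prod>j\<in>{1..m}. u powi (1 - 2 * int j)) = u powi (- (int m ^ 2))"
proof (induction m)
  case (Suc m)
  have "(\<Prod>j\<in>{1..Suc m}. u powi (1 - 2 * int j))
      = u powi (- (int m ^ 2)) * u powi (1 - 2 * int (Suc m))"
    using Suc by simp
  also have "\<dots> = u powi (- (int m ^ 2) + (1 - 2 * int (Suc m)))"
    by (simp only: power_int_add[OF disjI1[OF assms]])
  also have "- (int m ^ 2) + (1 - 2 * int (Suc m)) = - (int (Suc m) ^ 2)"
    by (simp add: power2_eq_square algebra_simps)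
  finally show ?case .
qed simp

lemma root_N_power: "root_N N ^ j = exp (2 * of_real pi * \<i> * of_nat j / of_nat N)"
  unfolding root_N_def by (metis exp_of_nat_mult times_divide_eq_right mult.commute)

lemma root_N_power_N: "N \<noteq> 0 \<Longrightarrow> root_N N ^ N = 1"
  by (simp add: root_N_power complex_root_unity)

lemma root_N_nonzero [simp]: "root_N N \<noteq> 0"
  by (simp add: root_N_def)

lemma inj_on_root_N_power:
  assumes "N \<noteq> 0"
  shows "inj_on (\<lambda>i. root_N N ^ i) {1..N}"
proof (rule inj_onI)
  fix i j assume "i \<in> {1..N}" "j \<in> {1..N}" "root_N N ^ i = root_N N ^ j"
  moreover from this have "i mod N = j mod N"
    using assms complex_root_unity_eq[of N i j] by (simp add: root_N_power)
  ultimately show "i = j"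
    by (cases "i = N"; cases "j = N") auto
qed

lemma prod_root_N_linear_factors:
  assumes "N \<noteq> 0"
  shows "(\<Prod>i\<in>{1..N}. t - root_N N ^ i) = t ^ N - 1"
proof -
  define p where "p = (\<Prod>i\<in>{1..N}. [:- (root_N N ^ i), 1:])"
  define q :: "complex poly" where "q = monom 1 N - 1"
  have "p = q"
  proof (rule poly_eqI_degree_lead_coeff[where n = N and A = "(\<lambda>i. root_N N ^ i) ` {1..N}"])
    have deg: "degree p = N" unfolding p_def by (subst degree_prod_sum_eq) auto
    have "lead_coeff p = 1" unfolding p_def by (simp add: lead_coeff_prod)
    then show "coeff p N = coeff q N" using deg assms by (simp add: q_def)
    show "card ((\<lambda>i. root_N N ^ i) ` {1..N}) \<ge> N"
      using card_image[OF inj_on_root_N_power[OF assms]] by simp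
    show "degree p \<le> N" using deg by simp
    show "degree q \<le> N" unfolding q_def by (intro degree_diff_le) (auto simp: degree_monom_le)
    show "poly p u = poly q u" if "u \<in> (\<lambda>i. root_N N ^ i) ` {1..N}" for u
    proof -
      from that obtain i where i: "i \<in> {1..N}" "u = root_N N ^ i" by auto
      have "poly p u = 0" unfolding p_def poly_prod using i by (intro prod_zero) auto
      moreover have "u ^ N = (root_N N ^ N) ^ i"
        using i by (simp add: mult.commute flip: power_mult)
      then have "poly q u = 0"
        using root_N_power_N[OF assms] by (simp add: q_def poly_monom)
      ultimately show ?thesis by simp
    qed
  qed
  then have "poly p t = poly q t" by simp
  then show ?thesis unfolding p_def q_def by (simp add: poly_prod poly_monom)
qed

lemma half_pow_eq_power_int: "half_pow N r = half_pow N 1 powi r"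
  by (simp add: half_pow_def)

lemma half_pow_nonzero [simp]: "half_pow N r \<noteq> 0"
  by (simp add: half_pow_def)

lemma half_pow_one: "half_pow N 1 = root_N N ^ (N div 2 + 1)"
  by (simp add: half_pow_def)

lemma half_pow_squared:
  assumes "odd N"
  shows "half_pow N 1 ^ 2 = root_N N"
proof -
  have "(N div 2 + 1) * 2 = Suc N" using odd_two_times_div_two_succ[OF assms] by simp
  then have "half_pow N 1 ^ 2 = root_N N * root_N N ^ N"
    by (simp only: half_pow_one flip: power_mult power_Suc)
  also have "\<dots> = root_N N" using assms by (simp add: root_N_power_N odd_pos)
  finally show ?thesis .
qed

lemma half_pow_power_N:
  assumes "odd N"
  shows "half_pow N 1 ^ N = 1"
proof -
  have "half_pow N 1 ^ N = (root_N N ^ N) ^ (N div 2 + 1)"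
    by (simp only: half_pow_one mult.commute flip: power_mult)
  also have "\<dots> = 1" using assms by (simp add: root_N_power_N odd_pos)
  finally show ?thesis .
qed

lemma prod_fermat_factors_period:
  assumes "N \<noteq> 0" "x \<noteq> 0" "y \<noteq> 0" "x ^ N + y ^ N = z ^ N"
  shows "(\<Prod>i\<in>{1..N}. y / (z - x * root_N N ^ i)) = 1"
proof -
  have "(\<Prod>i\<in>{1..N}. z - x * root_N N ^ i) = (\<Prod>i\<in>{1..N}. x * (z / x - root_N N ^ i))"
    using assms(2) by (intro prod.cong) (auto simp: field_simps)
  also have "\<dots> = x ^ N * (\<Prod>i\<in>{1..N}. z / x - root_N N ^ i)"
    by (simp add: prod.distrib)
  also have "\<dots> = z ^ N - x ^ N"
    unfolding prod_root_N_linear_factors[OF assms(1)] using assms(2)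
    by (simp add: field_simps)
  also have "\<dots> = y ^ N" using assms(4) by (simp add: algebra_simps)
  finally show ?thesis using assms(3) by (simp add: prod_dividef)
qed

lemma half_pow_power_int_cong:
  assumes "odd N" "a mod int N = b mod int N"
  shows "half_pow N 1 powi a = half_pow N 1 powi b"
  using power_int_mod_order[OF half_pow_power_N[OF assms(1)]] assms(2) by metis

lemma fermat_factor_reflect:
  assumes "odd N" "j \<in> {1..N}"
  shows "- half_pow N 1 * y / (root_N N * x - z * root_N N ^ j)
    = half_pow N 1 powi (1 - 2 * int j) * (y / (z - x * root_N N ^ (N + 1 - j)))"
proof -
  define h where "h = half_pow N 1"
  have h_sq: "h ^ 2 = root_N N" unfolding h_def using assms(1) by (rule half_pow_squared)
  have "root_N N ^ j * root_N N ^ (N + 1 - j) = root_N N * root_N N ^ N"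
    using assms(2) by (simp flip: power_add)
  also have "\<dots> = root_N N" using assms(1) by (simp add: root_N_power_N odd_pos)
  finally have den: "root_N N * x - z * root_N N ^ j
      = - (root_N N ^ j) * (z - x * root_N N ^ (N + 1 - j))"
    by (simp add: algebra_simps)
  have "root_N N ^ j = h powi (2 * int j)"
    by (simp add: power_int_mult flip: h_sq)
  moreover have "h powi (1 - 2 * int j) = h / h powi (2 * int j)"
    by (simp add: h_def power_int_diff)
  ultimately have "h powi (1 - 2 * int j) = h / root_N N ^ j" by simp
  then show ?thesis
    unfolding den h_def[symmetric] by (simp add: minus_divide_divide)
qed

lemma prod_fermat_factors_reflect:
  assumes "odd N" "m \<le> N"
  shows "(\<Prod>j\<in>{1..m}. - half_pow N 1 * y / (root_N N * x - z * root_N N ^ j))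
    = half_pow N 1 powi (- (int m ^ 2)) * (\<Prod>i\<in>{N + 1 - m..N}. y / (z - x * root_N N ^ i))"
proof -
  have "(\<Prod>j\<in>{1..m}. - half_pow N 1 * y / (root_N N * x - z * root_N N ^ j))
      = (\<Prod>j\<in>{1..m}. half_pow N 1 powi (1 - 2 * int j) * (y / (z - x * root_N N ^ (N + 1 - j))))"
    using assms by (intro prod.cong refl fermat_factor_reflect) auto
  also have "\<dots> = (\<Prod>j\<in>{1..m}. half_pow N 1 powi (1 - 2 * int j))
        * (\<Prod>j\<in>{1..m}. y / (z - x * root_N N ^ (N + 1 - j)))"
    by (rule prod.distrib)
  also have "(\<Prod>j\<in>{1..m}. half_pow N 1 powi (1 - 2 * int j)) = half_pow N 1 powi (- (int m ^ 2))"
    by (rule prod_power_int_odd) simp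
  also have "(\<Prod>j\<in>{1..m}. y / (z - x * root_N N ^ (N + 1 - j)))
      = (\<Prod>i\<in>{N + 1 - m..N}. y / (z - x * root_N N ^ i))"
    using assms(2)
    by (intro prod.reindex_bij_witness[where i = "\<lambda>i. N + 1 - i" and j = "\<lambda>j. N + 1 - j"]) auto
  finally show ?thesis .
qed

lemma fermat_omega_reflect:
  assumes "odd N" "n mod int N = int r" "r \<noteq> 0"
  shows "fermat_omega N z (- half_pow N 1 * y) (root_N N * x) (- n)
    = half_pow N 1 powi (- (int r ^ 2)) * (\<Prod>i\<in>{r + 1..N}. y / (z - x * root_N N ^ i))"
proof -
  define m where "m = N - r"
  have "r < N" using assms(1,2) by (metis odd_pos of_nat_0_less_iff of_nat_less_iff pos_mod_bound)
  then have "nat (- n mod int N) = m"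
    using assms(2,3) by (simp add: m_def zmod_zminus1_eq_if)
  then have "fermat_omega N z (- half_pow N 1 * y) (root_N N * x) (- n)
      = (\<Prod>j\<in>{1..m}. - half_pow N 1 * y / (root_N N * x - z * root_N N ^ j))"
    by (simp only: fermat_omega_def)
  also have "\<dots> = half_pow N 1 powi (- (int m ^ 2))
      * (\<Prod>i\<in>{N + 1 - m..N}. y / (z - x * root_N N ^ i))"
    using assms(1) by (rule prod_fermat_factors_reflect) (simp add: m_def)
  also have "N + 1 - m = r + 1" using \<open>r < N\<close> by (simp add: m_def)
  also have "half_pow N 1 powi (- (int m ^ 2)) = half_pow N 1 powi (- (int r ^ 2))"
  proof (rule half_pow_power_int_cong[OF assms(1)])
    have "- (int m ^ 2) = - (int r ^ 2) + (2 * int r - int N) * int N"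
      using \<open>r < N\<close> by (simp add: m_def power2_eq_square algebra_simps)
    then show "- (int m ^ 2) mod int N = - (int r ^ 2) mod int N"
      by (simp only: mod_mult_self1)
  qed
  finally show ?thesis .
qed

lemma fermat_omega_mult_reflect:
  assumes "odd N" "x \<noteq> 0" "y \<noteq> 0" "x ^ N + y ^ N = z ^ N"
  shows "fermat_omega N x y z n * fermat_omega N z (- half_pow N 1 * y) (root_N N * x) (- n)
    = half_pow N 1 powi (- (n ^ 2))"
proof -
  define r where "r = nat (n mod int N)"
  define F where "F i = y / (z - x * root_N N ^ i)" for i
  have "N \<noteq> 0" using assms(1) by (simp add: odd_pos)
  then have r: "n mod int N = int r" "r < N"
    by (simp_all add: r_def nat_less_iff)
  have rhs: "half_pow N 1 powi (- (n ^ 2)) = half_pow N 1 powi (- (int r ^ 2))"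
    using assms(1) by (rule half_pow_power_int_cong) (metis r(1) mod_minus_eq power_mod)
  show ?thesis
  proof (cases "r = 0")
    case True
    then have "n mod int N = 0" "- n mod int N = 0"
      using r(1) by (simp_all add: zmod_zminus1_eq_if)
    then show ?thesis unfolding fermat_omega_def rhs r_def by simp
  next
    case False
    have "{1..N} = {1..r} \<union> {r + 1..N}" using r(2) by auto
    then have "(\<Prod>i\<in>{1..r}. F i) * (\<Prod>i\<in>{r + 1..N}. F i) = (\<Prod>i\<in>{1..N}. F i)"
      by (simp add: prod.union_disjoint)
    also have "\<dots> = 1"
      unfolding F_def using \<open>N \<noteq> 0\<close> assms(2-4) by (rule prod_fermat_factors_period)
    finally have "fermat_omega N x y z n * (\<Prod>i\<in>{r + 1..N}. F i) = 1"
      by (simp add: fermat_omega_def F_def r_def)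
    then show ?thesis
      unfolding rhs fermat_omega_reflect[OF assms(1) r(1) False] F_def[symmetric]
      by (simp add: mult.left_commute)
  qed
qed

theorem lemma6p2:
  fixes N P :: nat and x y z :: complex and k l :: int
  assumes "N = 2 * P + 1" and "N \<ge> 3"
    and "x \<noteq> 0" and "y \<noteq> 0" and "z \<noteq> 0"
    and "x ^ N + y ^ N = z ^ N"
  shows "fermat_omega N x y z (k - l) =
    (root_N N powi (k * l) * half_pow N (- (l ^ 2)) * half_pow N (- (k ^ 2)))
    / fermat_omega N z (- half_pow N 1 * y) (root_N N * x) (l - k)"
proof -
  define h where "h = half_pow N 1"
  have "odd N" using assms(1) by simp
  have "h \<noteq> 0" by (simp add: h_def)
  have "root_N N powi (k * l) * half_pow N (- (l ^ 2)) * half_pow N (- (k ^ 2))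
      = h powi (2 * k * l) * h powi (- (l ^ 2)) * h powi (- (k ^ 2))"
    unfolding h_def half_pow_squared[OF \<open>odd N\<close>, symmetric] half_pow_eq_power_int[of N "- _"]
    by (simp add: power_int_power mult.assoc)
  also have "\<dots> = h powi (2 * k * l + - (l ^ 2) + - (k ^ 2))"
    by (simp only: power_int_add[OF disjI1[OF \<open>h \<noteq> 0\<close>]])
  also have "2 * k * l + - (l ^ 2) + - (k ^ 2) = - ((k - l) ^ 2)"
    by (simp add: power2_eq_square algebra_simps)
  also have "h powi (- ((k - l) ^ 2))
      = fermat_omega N x y z (k - l) * fermat_omega N z (- h * y) (root_N N * x) (l - k)"
    using fermat_omega_mult_reflect[OF \<open>odd N\<close> assms(3,4,6), of "k - l"] by (simp add: h_def)
  finally show ?thesis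
    using \<open>h \<noteq> 0\<close> by (auto simp: h_def eq_divide_eq)
qed

end
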